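(* Let $A\ge 1$ and $0<\sigma<1$. Let $W(\sigma,A)$ be as in the context, let ${}_2F_1(1,2A+2,2A+3,\sigma)=(2A+2)\sum_{n\ge0}\frac{\sigma^n}{n+2A+2}$, and let $Q(\sigma,A)=\sum_{i=0}^{11}q_i(\sigma)A^{11-i}(1-\sigma)^{11-i}$ with $q_0=64$, $q_1=32(4+7\sigma)$, $q_2=80(-3+13\sigma)$, $q_3=48(-12+3\sigma+39\sigma^2-17\sigma^3)$, $q_4=12(17-278\sigma+400\sigma^2-90\sigma^3-65\sigma^4)$, $q_5=6(980+1365\sigma+424\sigma^2+1374\sigma^3-876\sigma^4+109\sigma^5)$, $q_6=35363+88857\sigma+75432\sigma^2+45698\sigma^3-1965\sigma^4-2715\sigma^5+1250\sigma^6$, $q_7=100336+279172\sigma+377163\sigma^2+267688\sigma^3+118786\sigma^4-12360\sigma^5+2611\sigma^6+244\sigma^7$, $q_8=2(74901+220667\sigma+395067\sigma^2+388137\sigma^3+222947\sigma^4+77061\sigma^5-2895\sigma^6+1355\sigma^7-240\sigma^8)$, $q_9=3(40659+122280\sigma+287397\sigma^2+350940\sigma^3+284873\sigma^4+126322\sigma^5+37701\sigma^6+724\sigma^7+206\sigma^8-102\sigma^9)$, $q_{10}=9(5673+16595\sigma+51926\sigma^2+83180\sigma^3+83930\sigma^4+50678\sigma^5+17870\sigma^6+4994\sigma^7+155\sigma^8+5\sigma^9-6\sigma^{10})$, $q_{11}=27(315+840\sigma+3465\sigma^2+9576\sigma^3+6510\sigma^4+9864\sigma^5+3150\sigma^6+1000\sigma^7+279\sigma^8+\sigma^{10})$.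 Define $$\widetilde H(\sigma,A)=\frac{12}{35}\sigma^2\left\{\frac{Q(\sigma,A)}{(1-\sigma)^3W(\sigma,A)^3}-A(A-1)(A^2-1)(4A^2-1)(4A^2-9)\frac{(1-\sigma)^6}{W(\sigma,A)^2}\,{}_2F_1(1,2A+2,2A+3,\sigma)\right\}.$$ Then for every $a>0$, $\lambda\ge0$ with $A=\sqrt{1+3\lambda/a^2}$, the function $H(S)=a^3\widetilde H(e^{-aS},A)$ is the unique solution on $(0,\infty)$ of $$4Y(S,a,\lambda)H(S)+\Bigl(\tfrac{d}{dS}Y(S,a,\lambda)\Bigr)^2+6H'(S)=0$$ satisfying $H(S)\to0$ as $S\to\infty$, where $Y$ is as in the context. Moreover $\widetilde H(\sigma,A)=\frac{108\,\sigma^2}{(A+1)(2A+1)^2}+O(\sigma^3)$ as $\sigma\to0$.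
   Context: $W(\sigma,A)=4A^3(1-\sigma)^3+12A^2(1-\sigma)^2(1+\sigma)+A(1-\sigma)(11+38\sigma+11\sigma^2)+3(1+\sigma)(1+8\sigma+\sigma^2)$, $U(\sigma,A)=2A^2(1-\sigma)^2+5A(1-\sigma)(1+\sigma)+3(1+3\sigma+\sigma^2)$, and with $\sigma=e^{-aS}$, $Y(S,a,\lambda)=a\bigl(-3A-36\,\sigma U(\sigma,A)/((1-\sigma)W(\sigma,A))\bigr)$. *)

theory Defs
  imports "HOL-Analysis.Analysis" "HOL-Library.Landau_Symbols"
begin

definition W :: "real \<Rightarrow> real \<Rightarrow> real" where
  "W \<sigma> A = 4*A^3*(1-\<sigma>)^3 + 12*A^2*(1-\<sigma>)^2*(1+\<sigma>)
     + A*(1-\<sigma>)*(11 + 38*\<sigma> + 11*\<sigma>^2) + 3*(1+\<sigma>)*(1 + 8*\<sigma> + \<sigma>^2)"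

definition U :: "real \<Rightarrow> real \<Rightarrow> real" where
  "U \<sigma> A = 2*A^2*(1-\<sigma>)^2 + 5*A*(1-\<sigma>)*(1+\<sigma>) + 3*(1 + 3*\<sigma> + \<sigma>^2)"

definition Apar :: "real \<Rightarrow> real \<Rightarrow> real" where
  "Apar a lam = sqrt (1 + 3*lam/a^2)"

definition Y :: "real \<Rightarrow> real \<Rightarrow> real \<Rightarrow> real" where
  "Y S a lam = (let A = Apar a lam; \<sigma> = exp (-a*S) in
     a * (-3*A - 36*\<sigma>*U \<sigma> A / ((1-\<sigma>) * W \<sigma> A)))"

definition hyp2F1 :: "real \<Rightarrow> real \<Rightarrow> real" where
  "hyp2F1 \<sigma> A = (2*A+2) * (\<Sum>n. \<sigma>^n / (real n + 2*A + 2))"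

definition qcoef :: "nat \<Rightarrow> real \<Rightarrow> real" where
  "qcoef i x = [64,
     32*(4+7 * x),
     80*(-3+13 * x),
     48*(-12+3 * x+39 * x^2-17 * x^3),
     12*(17-278 * x+400 * x^2-90 * x^3-65 * x^4),
     6*(980+1365 * x+424 * x^2+1374 * x^3-876 * x^4+109 * x^5),
     35363+88857 * x+75432 * x^2+45698 * x^3-1965 * x^4-2715 * x^5+1250 * x^6,
     100336+279172 * x+377163 * x^2+267688 * x^3+118786 * x^4-12360 * x^5+2611 * x^6+244 * x^7,
     2*(74901+220667 * x+395067 * x^2+388137 * x^3+222947 * x^4+77061 * x^5-2895 * x^6+1355 * x^7-240 * x^8),
     3*(40659+122280 * x+287397 * x^2+350940 * x^3+284873 * x^4+126322 * x^5+37701 * x^6+724 * x^7+206 * x^8-102 * x^9),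
     9*(5673+16595 * x+51926 * x^2+83180 * x^3+83930 * x^4+50678 * x^5+17870 * x^6+4994 * x^7+155 * x^8+5 * x^9-6 * x^10),
     27*(315+840 * x+3465 * x^2+9576 * x^3+6510 * x^4+9864 * x^5+3150 * x^6+1000 * x^7+279 * x^8+x^10)] ! i"

definition Q :: "real \<Rightarrow> real \<Rightarrow> real" where
  "Q \<sigma> A = (\<Sum>i\<le>11. qcoef i \<sigma> * A^(11-i) * (1-\<sigma>)^(11-i))"

definition Htilde :: "real \<Rightarrow> real \<Rightarrow> real" where
  "Htilde \<sigma> A = 12/35 * \<sigma>^2 *
     (Q \<sigma> A / ((1-\<sigma>)^3 * (W \<sigma> A)^3)
      - A*(A-1)*(A^2-1)*(4*A^2-1)*(4*A^2-9) * (1-\<sigma>)^6 / (W \<sigma> A)^2 * hyp2F1 \<sigma> A)"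

definition H :: "real \<Rightarrow> real \<Rightarrow> real \<Rightarrow> real" where
  "H a lam S = a^3 * Htilde (exp (-a*S)) (Apar a lam)"

definition solves_ode :: "real \<Rightarrow> real \<Rightarrow> (real \<Rightarrow> real) \<Rightarrow> bool" where
  "solves_ode a lam G \<longleftrightarrow> (\<forall>S>0. (\<lambda>s. Y s a lam) differentiable (at S) \<and> G differentiable (at S) \<and>
      4 * Y S a lam * G S + (deriv (\<lambda>s. Y s a lam) S)^2 + 6 * deriv G S = 0)"

end

theory Submission
  imports Defs "HOL-Real_Asymp.Real_Asymp"
begin

text \<open>
  In the variable \<open>\<sigma> = exp (-a*S)\<close> one has \<open>Y = a * Ytilde \<sigma>\<close> and \<open>H = a^3 * Htilde \<sigma>\<close>,
  and the equation becomes the linear equation \<open>4 Ytilde h + \<sigma>^2 Ytilde'^2 - 6 \<sigma> h' = 0\<close>.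
  Write \<open>Htilde = Hpart - Hhom * \<Phi>\<close> with \<open>\<Phi> \<sigma> = \<Sum>n. \<sigma>^n / (n + 2A + 2)\<close>.
  The series satisfies \<open>\<sigma> \<Phi>' + (2A + 2) \<Phi> = 1 / (1 - \<sigma>)\<close>, and \<open>Hhom\<close> is
  \<open>\<sigma>^(2A+2)\<close> times a solution \<open>\<sigma>^(-2A) (1-\<sigma>)^6 / W^2\<close> of the homogeneous equation
  (this is the identity \<open>3 W + (1 - \<sigma>) W' = 12 U\<close>). Hence all terms containing \<open>\<Phi>\<close>
  cancel, and what remains, \<open>6 Hhom / (1 - \<sigma>)\<close>, is balanced by the rational part \<open>Hpart\<close>
  through a polynomial identity.

  Uniqueness: the difference \<open>g\<close> of two solutions satisfies \<open>6 g' = -4 Y g\<close> with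
  \<open>Y \<le> 0\<close>, so \<open>g^2\<close> is nondecreasing; since it tends to 0, \<open>g = 0\<close>. The expansion
  at \<open>\<sigma> = 0\<close> comes from \<open>Htilde = \<sigma>^2 F\<close> with \<open>F\<close> differentiable at 0.
\<close>

definition lerch :: "real \<Rightarrow> real \<Rightarrow> real" where
  "lerch c z = (\<Sum>n. z^n / (real n + c))"

lemma lerch_powser: "lerch c = (\<lambda>z. \<Sum>n. inverse (real n + c) * z^n)"
  by (simp add: fun_eq_iff lerch_def divide_inverse mult.commute)

lemma summable_lerch:
  assumes "c > 0" "\<bar>z\<bar> < 1"
  shows "summable (\<lambda>n. inverse (real n + c) * z^n)"
proof (rule summable_comparison_test')
  show "summable (\<lambda>n. \<bar>z\<bar>^n / c)"
    using assms by (simp add: summable_divide)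
  show "norm (inverse (real n + c) * z^n) \<le> \<bar>z\<bar>^n / c" for n
  proof -
    have "inverse (real n + c) \<le> inverse c"
      using assms by (intro le_imp_inverse_le) auto
    from mult_right_mono[OF this, of "\<bar>z\<bar>^n"] show ?thesis
      using assms by (simp add: abs_mult power_abs divide_inverse mult.commute)
  qed
qed

lemma lerch_0: "lerch c 0 = inverse c"
  by (simp add: lerch_powser powser_zero)

lemma DERIV_lerch:
  assumes "c > 0" "\<bar>z\<bar> < 1"
  shows "(lerch c has_real_derivative (\<Sum>n. diffs (\<lambda>n. inverse (real n + c)) n * z^n)) (at z)"
  unfolding lerch_powser by (rule termdiffs_strong'[where K=1]) (use assms summable_lerch in auto)

lemma lerch_ode:
  assumes "c > 0" "\<bar>z\<bar> < 1"
  shows "z * deriv (lerch c) z + c * lerch c z = 1 / (1 - z)"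
proof -
  define a where "a = (\<lambda>n. inverse (real n + c))"
  have "summable (\<lambda>n. diffs a n * z^n)"
    unfolding a_def by (rule termdiff_converges[where K=1]) (use assms summable_lerch in auto)
  then have "(\<lambda>n. real n * a n * z^(n - 1)) sums deriv (lerch c) z"
    using diffs_equiv DERIV_imp_deriv[OF DERIV_lerch[OF assms, folded a_def]] by simp
  then have "(\<lambda>n. z * (real n * a n * z^(n - 1)) + c * (a n * z^n)) sums (z * deriv (lerch c) z + c * lerch c z)"
    using summable_lerch[OF assms] by (intro sums_add sums_mult) (auto simp: a_def lerch_powser summable_sums)
  moreover have "z * (real n * a n * z^(n - 1)) + c * (a n * z^n) = z^n" for n
  proof -
    have "z * (real n * a n * z^(n - 1)) = real n * a n * z^n"
      by (cases n) auto
    then have "z * (real n * a n * z^(n - 1)) + c * (a n * z^n) = (real n + c) * a n * z^n"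
      by (simp add: algebra_simps)
    also have "\<dots> = z^n"
      using assms by (simp add: a_def)
    finally show ?thesis .
  qed
  ultimately have "(\<lambda>n. z^n) sums (z * deriv (lerch c) z + c * lerch c z)"
    by simp
  then show ?thesis
    using geometric_sums[of z] assms by (simp add: sums_unique2)
qed

lemma hyp2F1_eq_lerch: "hyp2F1 \<sigma> A = (2*A + 2) * lerch (2*A + 2) \<sigma>"
  by (simp add: hyp2F1_def lerch_def add.assoc)

definition W' :: "real \<Rightarrow> real \<Rightarrow> real" where
  "W' \<sigma> A =
     (27 + 27*A - 12*A^2 - 12*A^3)
   + (54 - 54*A - 24*A^2 + 24*A^3) * \<sigma>
   + (9 - 33*A + 36*A^2 - 12*A^3) * \<sigma>^2"

definition U' :: "real \<Rightarrow> real \<Rightarrow> real" where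
  "U' \<sigma> A =
     (9 - 4*A^2)
   + (6 - 10*A + 4*A^2) * \<sigma>"

definition Q' :: "real \<Rightarrow> real \<Rightarrow> real" where
  "Q' \<sigma> A =
     (22680 + 98298*A + 122886*A^2 - 8072*A^3 - 122172*A^4 - 87958*A^5 - 27090*A^6
        - 4764*A^7 + 4752*A^8 + 3200*A^9 - 1056*A^10 - 704*A^11)
   + (187110 + 635958*A + 500976*A^2 - 168924*A^3 - 275018*A^4 - 30446*A^5
        + 83208*A^6 + 64872*A^7 - 30816*A^8 - 36000*A^9 + 7040*A^10 + 7040*A^11) * \<sigma>
   + (775656 + 843858*A - 914166*A^2 - 1259784*A^3 + 98172*A^4 + 610434*A^5
        - 5310*A^6 - 335628*A^7 + 61488*A^8 + 172800*A^9 - 15840*A^10 - 31680*A^11) * \<sigma>^2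
   + (703080 + 27000*A - 1555320*A^2 + 184560*A^3 + 1178640*A^4 - 751560*A^5
        - 368640*A^6 + 925920*A^7 + 42240*A^8 - 470400*A^9 + 84480*A^11) * \<sigma>^3
   + (1331640 - 1496340*A - 1387260*A^2 + 1775640*A^3 - 554280*A^4 + 593460*A^5
        + 962700*A^6 - 1531320*A^7 - 426720*A^8 + 806400*A^9 + 73920*A^10
        - 147840*A^11) * \<sigma>^4
   + (510300 - 1771632*A + 1258740*A^2 + 559512*A^3 + 427068*A^4 - 1041012*A^5
        - 1516464*A^6 + 1565424*A^7 + 915264*A^8 - 907200*A^9 - 177408*A^10
        + 177408*A^11) * \<sigma>^5
   + (189000 - 811188*A + 1084524*A^2 + 255864*A^3 - 2042712*A^4 + 975156*A^5
        + 1620612*A^6 - 943992*A^7 - 1073184*A^8 + 672000*A^9 + 221760*A^10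
        - 147840*A^11) * \<sigma>^6
   + (60264 - 348408*A + 875016*A^2 - 1440816*A^3 + 1463328*A^4 - 126984*A^5
        - 1110720*A^6 + 258528*A^7 + 771072*A^8 - 316800*A^9 - 168960*A^10
        + 84480*A^11) * \<sigma>^7
   + (-12150*A + 5670*A^2 + 138240*A^3 - 192060*A^4 - 216990*A^5 + 446310*A^6
        + 36180*A^7 - 339120*A^8 + 86400*A^9 + 79200*A^10 - 31680*A^11) * \<sigma>^8
   + (270 - 990*A + 12300*A^2 - 41500*A^3 + 16350*A^4 + 89650*A^5 - 91800*A^6
        - 43800*A^7 + 84000*A^8 - 10400*A^9 - 21120*A^10 + 7040*A^11) * \<sigma>^9
   + (594*A - 3366*A^2 + 5280*A^3 + 2684*A^4 - 13750*A^5 + 7194*A^6 + 8580*A^7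
        - 8976*A^8 + 2464*A^10 - 704*A^11) * \<sigma>^10"

lemma DERIV_W: "((\<lambda>\<sigma>. W \<sigma> A) has_real_derivative W' \<sigma> A) (at \<sigma> within S)"
  unfolding W_def W'_def by (rule derivative_eq_intros refl)+ (simp; algebra)

lemma DERIV_U: "((\<lambda>\<sigma>. U \<sigma> A) has_real_derivative U' \<sigma> A) (at \<sigma> within S)"
  unfolding U_def U'_def by (rule derivative_eq_intros refl)+ (simp; algebra)

lemma DERIV_Q: "((\<lambda>\<sigma>. Q \<sigma> A) has_real_derivative Q' \<sigma> A) (at \<sigma> within S)"
  unfolding Q_def qcoef_def
  by (simp add: eval_nat_numeral, (rule derivative_eq_intros refl)+) (simp add: Q'_def; algebra)

lemma W_pos: "A \<ge> 0 \<Longrightarrow> 0 \<le> \<sigma> \<Longrightarrow> \<sigma> < 1 \<Longrightarrow> W \<sigma> A > 0"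
  unfolding W_def by (intro add_nonneg_pos add_nonneg_nonneg mult_pos_pos add_pos_nonneg) auto

lemma U_pos: "A \<ge> 0 \<Longrightarrow> 0 \<le> \<sigma> \<Longrightarrow> \<sigma> < 1 \<Longrightarrow> U \<sigma> A > 0"
  unfolding U_def by (intro add_nonneg_pos add_nonneg_nonneg mult_pos_pos add_pos_nonneg) auto

lemma W'_U_relation: "3 * W \<sigma> A + (1 - \<sigma>) * W' \<sigma> A = 12 * U \<sigma> A"
  unfolding W_def W'_def U_def by algebra

lemma W_at_0: "W 0 A = (A + 1) * (2*A + 1) * (2*A + 3)"
  by (simp add: W_def; algebra)

lemma Q_at_0:
  "Q 0 A = A*(A-1)*(A^2-1)*(4*A^2-1)*(4*A^2-9) * W 0 A + 315 * (A+1)^2 * (2*A+1) * (2*A+3)^3"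
  unfolding Q_def qcoef_def W_def by (simp add: eval_nat_numeral) algebra

text \<open>\<open>Hpart_ode\<close> below, multiplied by \<open>35 (1 - \<sigma>)^4 W^4 / (12 \<sigma>^2)\<close>.\<close>

lemma Hpart_polynomial_identity:
  "4*(-3*A*(1-\<sigma>)*W \<sigma> A - 36*\<sigma>*U \<sigma> A) * Q \<sigma> A
   + 3780 * ((U \<sigma> A + \<sigma>*U' \<sigma> A)*(1-\<sigma>)*W \<sigma> A + \<sigma>*U \<sigma> A*W \<sigma> A - \<sigma>*U \<sigma> A*(1-\<sigma>)*W' \<sigma> A)^2
   - 6*(2*(1-\<sigma>)*W \<sigma> A*Q \<sigma> A + \<sigma>*((1-\<sigma>)*W \<sigma> A*Q' \<sigma> A + 3*Q \<sigma> A*(W \<sigma> A - (1-\<sigma>)*W' \<sigma> A)))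
   + 6*(2*A+2)*A*(A-1)*(A^2-1)*(4*A^2-1)*(4*A^2-9)*(1-\<sigma>)^9*(W \<sigma> A)^2 = 0"
  unfolding Q_def qcoef_def
  by (simp add: eval_nat_numeral) (unfold Q'_def W'_def U'_def W_def U_def, algebra)

definition Ytilde :: "real \<Rightarrow> real \<Rightarrow> real" where
  "Ytilde \<sigma> A = -3*A - 36*\<sigma>*U \<sigma> A / ((1-\<sigma>) * W \<sigma> A)"

definition Hpart :: "real \<Rightarrow> real \<Rightarrow> real" where
  "Hpart \<sigma> A = 12/35 * \<sigma>^2 * (Q \<sigma> A / ((1-\<sigma>)^3 * (W \<sigma> A)^3))"

definition Hhom :: "real \<Rightarrow> real \<Rightarrow> real" where
  "Hhom \<sigma> A = 12/35 * \<sigma>^2 * (A*(A-1)*(A^2-1)*(4*A^2-1)*(4*A^2-9) * (1-\<sigma>)^6 / (W \<sigma> A)^2 * (2*A+2))"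

lemma Y_eq_Ytilde: "Y S a lam = a * Ytilde (exp (-a*S)) (Apar a lam)"
  by (simp add: Y_def Ytilde_def Let_def)

lemma Htilde_eq_Hpart_Hhom: "Htilde \<sigma> A = Hpart \<sigma> A - Hhom \<sigma> A * lerch (2*A+2) \<sigma>"
  unfolding Htilde_def Hpart_def Hhom_def hyp2F1_eq_lerch by (simp only: right_diff_distrib mult.assoc)

lemma Ytilde_nonpos:
  assumes "A \<ge> 0" "0 \<le> \<sigma>" "\<sigma> < 1"
  shows "Ytilde \<sigma> A \<le> 0"
proof -
  have "36 * \<sigma> * U \<sigma> A / ((1 - \<sigma>) * W \<sigma> A) \<ge> 0"
    using assms W_pos[OF assms] U_pos[OF assms] by simp
  then show ?thesis
    using assms by (simp add: Ytilde_def)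
qed

lemma Hpart_ode:
  assumes W: "W \<sigma> A \<noteq> 0" and \<sigma>: "\<sigma> \<noteq> 1"
  obtains y' p' where "((\<lambda>\<sigma>. Ytilde \<sigma> A) has_real_derivative y') (at \<sigma>)"
    and "((\<lambda>\<sigma>. Hpart \<sigma> A) has_real_derivative p') (at \<sigma>)"
    and "4 * Ytilde \<sigma> A * Hpart \<sigma> A + \<sigma>^2 * y'^2 - 6 * \<sigma> * p' + 6 * Hhom \<sigma> A / (1 - \<sigma>) = 0"
proof -
  have D: "1 - \<sigma> \<noteq> 0"
    using \<sigma> by simp
  define N where "N = (U \<sigma> A + \<sigma>*U' \<sigma> A)*(1-\<sigma>)*W \<sigma> A + \<sigma>*U \<sigma> A*W \<sigma> A - \<sigma>*U \<sigma> A*(1-\<sigma>)*W' \<sigma> A"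
  define y' where "y' = -36 * N / ((1-\<sigma>)^2 * (W \<sigma> A)^2)"
  define p' where "p' = 12/35 * (2*\<sigma>*Q \<sigma> A / ((1-\<sigma>)^3 * (W \<sigma> A)^3)
      + \<sigma>^2 * ((1-\<sigma>)*W \<sigma> A*Q' \<sigma> A + 3*Q \<sigma> A*(W \<sigma> A - (1-\<sigma>)*W' \<sigma> A)) / ((1-\<sigma>)^4 * (W \<sigma> A)^4))"
  have "((\<lambda>\<sigma>. Ytilde \<sigma> A) has_real_derivative y') (at \<sigma>)"
    unfolding Ytilde_def y'_def N_def
    apply (rule derivative_eq_intros refl DERIV_W DERIV_U | (use W D in simp; fail))+
    using W D by (simp add: divide_simps; algebra)
  moreover have "((\<lambda>\<sigma>. Hpart \<sigma> A) has_real_derivative p') (at \<sigma>)"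
    unfolding Hpart_def p'_def
    apply (rule derivative_eq_intros refl DERIV_W DERIV_Q | (use W D in simp; fail))+
    using W D by (simp add: divide_simps; algebra)
  moreover have "4 * Ytilde \<sigma> A * Hpart \<sigma> A + \<sigma>^2 * y'^2 - 6 * \<sigma> * p' + 6 * Hhom \<sigma> A / (1 - \<sigma>) = 0"
    using Hpart_polynomial_identity[of A \<sigma>] W D
    unfolding Ytilde_def Hpart_def Hhom_def y'_def p'_def N_def by (simp add: divide_simps; algebra)
  ultimately show ?thesis
    by (rule that)
qed

lemma DERIV_Hhom:
  assumes W: "W \<sigma> A \<noteq> 0" and "\<sigma> \<noteq> 1" "\<sigma> \<noteq> 0"
  shows "((\<lambda>\<sigma>. Hhom \<sigma> A) has_real_derivative (4 * Ytilde \<sigma> A + 6*(2*A+2)) * Hhom \<sigma> A / (6*\<sigma>)) (at \<sigma>)"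
proof -
  have D: "1 - \<sigma> \<noteq> 0"
    using assms by simp
  show ?thesis
    unfolding Hhom_def
    apply (rule derivative_eq_intros refl DERIV_W | (use W D in simp; fail))+
    using W D assms W'_U_relation[of \<sigma> A] by (simp add: Ytilde_def divide_simps; algebra)
qed

lemma Htilde_ode:
  assumes A: "A \<ge> 0" and \<sigma>: "0 < \<sigma>" "\<sigma> < 1"
  obtains y' h' where "((\<lambda>\<sigma>. Ytilde \<sigma> A) has_real_derivative y') (at \<sigma>)"
    and "((\<lambda>\<sigma>. Htilde \<sigma> A) has_real_derivative h') (at \<sigma>)"
    and "4 * Ytilde \<sigma> A * Htilde \<sigma> A + \<sigma>^2 * y'^2 - 6 * \<sigma> * h' = 0"
proof -
  define c where "c = 2*A + 2"
  define \<phi> where "\<phi> = lerch c \<sigma>"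
  define \<phi>' where "\<phi>' = deriv (lerch c) \<sigma>"
  have c: "c > 0" and \<sigma>1: "\<bar>\<sigma>\<bar> < 1"
    using A \<sigma> by (auto simp: c_def)
  have W: "W \<sigma> A \<noteq> 0"
    using W_pos[OF A] \<sigma> by (simp add: less_imp_neq[symmetric])
  obtain y' p' where y': "((\<lambda>\<sigma>. Ytilde \<sigma> A) has_real_derivative y') (at \<sigma>)"
    and p': "((\<lambda>\<sigma>. Hpart \<sigma> A) has_real_derivative p') (at \<sigma>)"
    and part: "4 * Ytilde \<sigma> A * Hpart \<sigma> A + \<sigma>^2 * y'^2 - 6 * \<sigma> * p' + 6 * Hhom \<sigma> A / (1 - \<sigma>) = 0"
    using Hpart_ode[OF W] \<sigma> by auto
  define h1 where "h1 = (4 * Ytilde \<sigma> A + 6*c) * Hhom \<sigma> A / (6*\<sigma>)"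
  have hom: "((\<lambda>\<sigma>. Hhom \<sigma> A) has_real_derivative h1) (at \<sigma>)"
    unfolding h1_def c_def using DERIV_Hhom[OF W] \<sigma> by simp
  have hom_eq: "6 * \<sigma> * h1 = (4 * Ytilde \<sigma> A + 6*c) * Hhom \<sigma> A"
    using \<sigma> by (simp add: h1_def)
  have "(lerch c has_real_derivative \<phi>') (at \<sigma>)"
    unfolding \<phi>'_def using DERIV_lerch[OF c \<sigma>1] by (simp add: DERIV_imp_deriv)
  from DERIV_diff[OF p' DERIV_mult[OF hom this]]
  have h': "((\<lambda>\<sigma>. Htilde \<sigma> A) has_real_derivative p' - (h1 * \<phi> + \<phi>' * Hhom \<sigma> A)) (at \<sigma>)"
    by (simp add: Htilde_eq_Hpart_Hhom c_def \<phi>_def)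
  define q where "q = 1 / (1 - \<sigma>)"
  have part': "4 * Ytilde \<sigma> A * Hpart \<sigma> A + \<sigma>^2 * y'^2 - 6 * \<sigma> * p' = - 6 * Hhom \<sigma> A * q"
    using part by (simp add: q_def)
  have lerch_eq: "\<sigma> * \<phi>' + c * \<phi> = q"
    unfolding \<phi>_def \<phi>'_def q_def by (rule lerch_ode[OF c \<sigma>1])
  have "Htilde \<sigma> A = Hpart \<sigma> A - Hhom \<sigma> A * \<phi>"
    by (simp add: Htilde_eq_Hpart_Hhom c_def \<phi>_def)
  with part' lerch_eq hom_eq
  have "4 * Ytilde \<sigma> A * Htilde \<sigma> A + \<sigma>^2 * y'^2 - 6 * \<sigma> * (p' - (h1 * \<phi> + \<phi>' * Hhom \<sigma> A)) = 0"
    by algebra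
  with y' h' show ?thesis
    by (rule that)
qed

lemma Apar_nonneg: "lam \<ge> 0 \<Longrightarrow> Apar a lam \<ge> 0"
  by (simp add: Apar_def)

lemma DERIV_compose_exp_neg:
  assumes "(f has_real_derivative f') (at (exp (-a*S)))"
  shows "((\<lambda>S. f (exp (-a*S))) has_real_derivative -a * exp (-a*S) * f') (at S)"
proof -
  have "((\<lambda>S. exp (-a*S)) has_real_derivative exp (-a*S) * (-a)) (at S)"
    by (rule derivative_eq_intros refl)+ simp
  from DERIV_chain2[OF assms this] show ?thesis
    by (simp add: mult_ac)
qed

lemma H_solves_ode:
  assumes a: "a > 0" and lam: "lam \<ge> 0"
  shows "solves_ode a lam (H a lam)"
  unfolding solves_ode_def
proof (intro allI impI)
  fix S :: real
  assume S: "S > 0"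
  define A where "A = Apar a lam"
  define \<sigma> where "\<sigma> = exp (-a*S)"
  have \<sigma>: "0 < \<sigma>" "\<sigma> < 1"
    using a S by (simp_all add: \<sigma>_def)
  obtain y' h' where y': "((\<lambda>\<sigma>. Ytilde \<sigma> A) has_real_derivative y') (at \<sigma>)"
    and h': "((\<lambda>\<sigma>. Htilde \<sigma> A) has_real_derivative h') (at \<sigma>)"
    and ode: "4 * Ytilde \<sigma> A * Htilde \<sigma> A + \<sigma>^2 * y'^2 - 6 * \<sigma> * h' = 0"
    using Htilde_ode[OF Apar_nonneg[OF lam] \<sigma>] unfolding A_def by blast
  have Y': "((\<lambda>s. Y s a lam) has_real_derivative a * (-a * \<sigma> * y')) (at S)"
    unfolding Y_eq_Ytilde A_def[symmetric] \<sigma>_def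
    by (intro DERIV_cmult DERIV_compose_exp_neg) (use y' in \<open>simp add: \<sigma>_def\<close>)
  have H': "(H a lam has_real_derivative a^3 * (-a * \<sigma> * h')) (at S)"
    unfolding H_def[abs_def] A_def[symmetric] \<sigma>_def
    by (intro DERIV_cmult DERIV_compose_exp_neg) (use h' in \<open>simp add: \<sigma>_def\<close>)
  have "4 * Y S a lam * H a lam S + (deriv (\<lambda>s. Y s a lam) S)^2 + 6 * deriv (H a lam) S
      = a^4 * (4 * Ytilde \<sigma> A * Htilde \<sigma> A + \<sigma>^2 * y'^2 - 6 * \<sigma> * h')"
    unfolding DERIV_imp_deriv[OF Y'] DERIV_imp_deriv[OF H']
    by (simp add: Y_eq_Ytilde H_def A_def \<sigma>_def power2_eq_square) algebra
  with Y' H' ode show "(\<lambda>s. Y s a lam) differentiable (at S) \<and> H a lam differentiable (at S) \<and>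
      4 * Y S a lam * H a lam S + (deriv (\<lambda>s. Y s a lam) S)^2 + 6 * deriv (H a lam) S = 0"
    by (auto simp: real_differentiable_def)
qed

lemma eq_0_if_tendsto_0_and_mult_deriv_nonneg:
  fixes g g' :: "real \<Rightarrow> real"
  assumes deriv: "\<And>t. t \<ge> S \<Longrightarrow> (g has_real_derivative g' t) (at t)"
    and sign: "\<And>t. t \<ge> S \<Longrightarrow> g t * g' t \<ge> 0"
    and lim: "(g \<longlongrightarrow> 0) at_top"
  shows "g S = 0"
proof -
  have mono: "(g S)^2 \<le> (g t)^2" if "S \<le> t" for t
  proof (rule DERIV_nonneg_imp_nondecreasing[OF that])
    fix x
    assume x: "S \<le> x"
    have "((\<lambda>t. (g t)^2) has_real_derivative 2 * (g x * g' x)) (at x)"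
      using deriv[OF x] by (auto intro!: derivative_eq_intros)
    with sign[OF x] show "\<exists>y. ((\<lambda>t. (g t)^2) has_real_derivative y) (at x) \<and> 0 \<le> y"
      by auto
  qed
  have "((\<lambda>t. (g t)^2) \<longlongrightarrow> 0^2) at_top"
    by (intro tendsto_intros lim)
  then have "(g S)^2 \<le> 0^2"
    by (rule tendsto_lowerbound) (auto intro: eventually_mono[OF eventually_ge_at_top[of S]] mono)
  then show ?thesis
    by simp
qed

lemma solves_ode_unique:
  assumes a: "a > 0" and lam: "lam \<ge> 0"
    and G: "solves_ode a lam G" "(G \<longlongrightarrow> 0) at_top"
    and G': "solves_ode a lam G'" "(G' \<longlongrightarrow> 0) at_top"
    and S: "S > 0"
  shows "G S = G' S"
proof -
  have "G S - G' S = 0"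
  proof (rule eq_0_if_tendsto_0_and_mult_deriv_nonneg
      [where g = "\<lambda>t. G t - G' t" and g' = "\<lambda>t. deriv G t - deriv G' t"])
    fix t
    assume "t \<ge> S"
    with S have t: "t > 0"
      by simp
    from G(1) G'(1) t have dG: "G differentiable (at t)" "G' differentiable (at t)"
      and eqs: "4 * Y t a lam * G t + (deriv (\<lambda>s. Y s a lam) t)^2 + 6 * deriv G t = 0"
        "4 * Y t a lam * G' t + (deriv (\<lambda>s. Y s a lam) t)^2 + 6 * deriv G' t = 0"
      unfolding solves_ode_def by auto
    show "((\<lambda>t. G t - G' t) has_real_derivative deriv G t - deriv G' t) (at t)"
      using dG by (intro DERIV_diff) (simp_all add: DERIV_deriv_iff_real_differentiable)
    have "Y t a lam \<le> 0"
      using Ytilde_nonpos[OF Apar_nonneg[OF lam], of "exp (-a*t)"] a t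
      by (simp add: Y_eq_Ytilde mult_nonneg_nonpos)
    then have "0 \<le> - 4 * Y t a lam * (G t - G' t)^2"
      by (simp add: mult_nonpos_nonneg)
    moreover have "6 * ((G t - G' t) * (deriv G t - deriv G' t)) = - 4 * Y t a lam * (G t - G' t)^2"
      using eqs by algebra
    ultimately show "(G t - G' t) * (deriv G t - deriv G' t) \<ge> 0"
      by linarith
  qed (use G(2) G'(2) in \<open>auto intro: tendsto_diff[where b=0 and a=0, simplified]\<close>)
  then show ?thesis
    by simp
qed

lemma bigo_diff_of_differentiable:
  fixes f :: "real \<Rightarrow> real"
  assumes "f differentiable (at x)"
  shows "(\<lambda>y. f y - f x) \<in> O[at x](\<lambda>y. y - x)"
proof -
  obtain D where "(f has_real_derivative D) (at x)"
    using assms by (auto simp: real_differentiable_def)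
  then have "((\<lambda>y. (f y - f x) / (y - x)) \<longlongrightarrow> D) (at x)"
    by (simp add: has_field_derivative_iff)
  then show ?thesis
    by (rule bigoI_tendsto) (simp add: eventually_at_filter)
qed

lemma Htilde_factor_at_0:
  assumes A: "A \<ge> 0"
  obtains F where "F differentiable (at 0)"
    and "\<And>\<sigma>. Htilde \<sigma> A = \<sigma>^2 * F \<sigma>"
    and "F 0 = 108 / ((A + 1) * (2*A + 1)^2)"
proof
  define F where "F \<sigma> = 12/35 * (Q \<sigma> A / ((1-\<sigma>)^3 * (W \<sigma> A)^3)
      - A*(A-1)*(A^2-1)*(4*A^2-1)*(4*A^2-9) * (1-\<sigma>)^6 / (W \<sigma> A)^2 * hyp2F1 \<sigma> A)" for \<sigma>
  show "Htilde \<sigma> A = \<sigma>^2 * F \<sigma>" for \<sigma>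
    by (simp add: Htilde_def F_def)
  have c: "2*A + 2 > 0"
    using A by simp
  have "(lerch (2*A + 2) has_real_derivative deriv (lerch (2*A + 2)) 0) (at 0)"
    using DERIV_lerch[OF c, of 0] by (simp add: DERIV_imp_deriv)
  moreover have "W 0 A \<noteq> 0"
    using W_pos[OF A, of 0] by simp
  ultimately have "\<exists>D. (F has_real_derivative D) (at 0)"
    unfolding F_def[abs_def] hyp2F1_eq_lerch
    by (intro exI) (rule derivative_eq_intros refl DERIV_W DERIV_Q | simp)+
  then show "F differentiable (at 0)"
    by (simp add: real_differentiable_def)
  define X where "X = (A+1)^2 * (2*A+1) * (2*A+3)^3"
  define Y where "Y = (A+1) * (2*A+1)^2"
  have W3: "(W 0 A)^3 = X * Y"
    unfolding W_at_0 X_def Y_def by algebra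
  have "X \<noteq> 0" "Y \<noteq> 0" "W 0 A \<noteq> 0"
    using A by (simp_all add: X_def Y_def W_at_0)
  then have "Q 0 A / (W 0 A)^3 - A*(A-1)*(A^2-1)*(4*A^2-1)*(4*A^2-9) / (W 0 A)^2
      = 315 * X / (W 0 A)^3"
    by (simp add: Q_at_0 X_def field_simps power3_eq_cube power2_eq_square)
  also have "\<dots> = 315 / Y"
    using \<open>X \<noteq> 0\<close> unfolding W3 by simp
  finally show "F 0 = 108 / ((A + 1) * (2*A + 1)^2)"
    using c by (simp add: F_def Y_def hyp2F1_eq_lerch lerch_0)
qed

lemma H_tendsto_0:
  assumes a: "a > 0" and lam: "lam \<ge> 0"
  shows "(H a lam \<longlongrightarrow> 0) at_top"
proof -
  obtain F where F: "F differentiable (at 0)" "\<And>\<sigma>. Htilde \<sigma> (Apar a lam) = \<sigma>^2 * F \<sigma>"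
    using Htilde_factor_at_0[OF Apar_nonneg[OF lam]] by blast
  have "isCont (\<lambda>\<sigma>. \<sigma>^2 * F \<sigma>) 0"
    using F(1) by (intro continuous_intros differentiable_imp_continuous_within)
  moreover have "((\<lambda>S. exp (-a*S)) \<longlongrightarrow> 0) at_top"
    using a by real_asymp
  ultimately have "((\<lambda>S. (exp (-a*S))^2 * F (exp (-a*S))) \<longlongrightarrow> 0) at_top"
    using isCont_tendsto_compose by fastforce
  then show ?thesis
    using tendsto_mult_right_zero[of _ at_top "a^3"] by (simp add: H_def[abs_def] F(2))
qed

lemma Htilde_bigo:
  assumes A: "A \<ge> 0"
  shows "(\<lambda>\<sigma>. Htilde \<sigma> A - 108*\<sigma>^2 / ((A + 1) * (2*A + 1)^2)) \<in> O[at_right 0](\<lambda>\<sigma>. \<sigma>^3)"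
proof -
  obtain F where F: "F differentiable (at 0)" "\<And>\<sigma>. Htilde \<sigma> A = \<sigma>^2 * F \<sigma>"
    and F0: "F 0 = 108 / ((A + 1) * (2*A + 1)^2)"
    using Htilde_factor_at_0[OF A] by blast
  have "(\<lambda>\<sigma>. F \<sigma> - F 0) \<in> O[at_right 0](\<lambda>\<sigma>. \<sigma>)"
    using landau_o.big.filter_mono[OF at_le[OF subset_UNIV] bigo_diff_of_differentiable[OF F(1)]] by simp
  then have "(\<lambda>\<sigma>. \<sigma>^2 * (F \<sigma> - F 0)) \<in> O[at_right 0](\<lambda>\<sigma>. \<sigma>^2 * \<sigma>)"
    by (rule landau_o.big.mult_left)
  then show ?thesis
    by (simp add: F(2) F0 right_diff_distrib power3_eq_cube power2_eq_square mult_ac)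
qed

theorem mainTheorem3:
  fixes a lam :: real
  assumes "a > 0" and "lam \<ge> 0"
  shows "solves_ode a lam (H a lam)
    \<and> ((H a lam) \<longlongrightarrow> 0) at_top
    \<and> (\<forall>G. solves_ode a lam G \<and> (G \<longlongrightarrow> 0) at_top \<longrightarrow> (\<forall>S>0. G S = H a lam S))
    \<and> (\<lambda>\<sigma>. Htilde \<sigma> (Apar a lam)
          - 108*\<sigma>^2 / ((Apar a lam + 1) * (2*Apar a lam + 1)^2)) \<in> O[at_right 0](\<lambda>\<sigma>. \<sigma>^3)"
  using H_solves_ode[OF assms] H_tendsto_0[OF assms] solves_ode_unique[OF assms]
    Htilde_bigo[OF Apar_nonneg[OF assms(2)]]
  by blast

end
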